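(* There exist unitaries $W_0, W_1, \dots, W_5$ acting on four qubits (three ancilla qubits and one target qubit), all independent of $U$, with the following property. For every $U\in SU(2)$ define $$C_{\mathrm{V}}(U) = W_5\,(I_{\mathrm{anc}}\otimes U)\,W_4\,(I_{\mathrm{anc}}\otimes U)\,W_3\,(I_{\mathrm{anc}}\otimes U)\,W_2\,(I_{\mathrm{anc}}\otimes U)\,W_1\,(I_{\mathrm{anc}}\otimes U)\,W_0,$$ so that $U$ is applied exactly 5 times to the target qubit. Then for every $U\in SU(2)$ and every single-qubit state $|\psi\rangle$, $$C_{\mathrm{V}}(U)\,|000\rangle\otimes|\psi\rangle = |000\rangle\otimes U^{-1}|\psi\rangle .$$ That is, $U^{-1}$ is implemented exactly, and all three ancilla qubits are returned to $|000\rangle$.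
   Context: All systems are qubits ($\mathbb{C}^2$). $I_{\mathrm{anc}}$ denotes the identity on the three ancilla qubits. $SU(2)$ denotes the $2\times2$ unitary matrices with determinant $1$. For a general $U\in U(2)$, the identity holds up to a global phase. *)

theory Defs
  imports "HOL-Analysis.Analysis"
begin

type_synonym qubit = "complex ^ 2"
type_synonym anc_idx = "2 \<times> 2 \<times> 2"
type_synonym four_idx = "anc_idx \<times> 2"

definition cadjoint :: "complex ^ 'n ^ 'm \<Rightarrow> complex ^ 'm ^ 'n" where
  "cadjoint A = (\<chi> i j. cnj (A $ j $ i))"

definition cunitary :: "complex ^ 'n ^ 'n \<Rightarrow> bool" where
  "cunitary A \<longleftrightarrow> A ** cadjoint A = mat 1 \<and> cadjoint A ** A = mat 1"

definition SU2 :: "(complex ^ 2 ^ 2) set" where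
  "SU2 = {U. cunitary U \<and> det U = 1}"

definition kron :: "'a::times ^ 'm ^ 'n \<Rightarrow> 'a ^ 'p ^ 'q \<Rightarrow> 'a ^ ('m \<times> 'p) ^ ('n \<times> 'q)" where
  "kron A B = (\<chi> r c. A $ fst r $ fst c * B $ snd r $ snd c)"

definition vkron :: "'a::times ^ 'n \<Rightarrow> 'a ^ 'm \<Rightarrow> 'a ^ ('n \<times> 'm)" where
  "vkron x y = (\<chi> i. x $ fst i * y $ snd i)"

definition ket000 :: "complex ^ anc_idx" where
  "ket000 = axis (0, 0, 0) 1"

definition anc_id_kron :: "complex ^ 2 ^ 2 \<Rightarrow> complex ^ four_idx ^ four_idx" where
  "anc_id_kron U = kron (mat 1 :: complex ^ anc_idx ^ anc_idx) U"

end

theory Submission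
  imports Defs
begin

text \<open>
  Keeping the entries of \<open>U\<close> as indeterminates, the circuit maps \<open>|000\<rangle> \<otimes> \<psi>\<close> to
  \<open>|000\<rangle> \<otimes> (det U)\<^sup>2 adj(U) \<psi>\<close>: a polynomial identity of degree five, valid for every
  \<open>2 \<times> 2\<close> matrix \<open>U\<close>, in which all amplitudes leaving the ancilla state \<open>|000\<rangle>\<close> cancel.
  For \<open>det U = 1\<close> the adjugate is the inverse.
\<close>

section \<open>Two-by-two matrices\<close>

lemma two_eq_zero_in_2: "(2::2) = 0"
  by simp

lemma forall_2_zero_one: "(\<forall>i::2. P i) \<longleftrightarrow> P 0 \<and> P 1"
  by (metis exhaust_2 two_eq_zero_in_2)

lemma sum_2_zero_one: "sum f (UNIV::2 set) = f 0 + f 1"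
  using sum_2[of f] by (simp add: two_eq_zero_in_2 add.commute)

definition adjugate2 :: "'a::comm_ring_1 ^ 2 ^ 2 \<Rightarrow> 'a ^ 2 ^ 2" where
  "adjugate2 U = (\<chi> i j. if i = j then U $ (1 - i) $ (1 - j) else - U $ i $ j)"
  \<comment> \<open>in the index type \<open>2\<close>, \<open>1 - i\<close> is the other index\<close>

lemma matrix_mul_adjugate2: "U ** adjugate2 U = mat (det U)"
  unfolding vec_eq_iff forall_2_zero_one
  by (simp add: matrix_matrix_mult_def adjugate2_def mat_def sum_2_zero_one det_2
      two_eq_zero_in_2 algebra_simps)

lemma matrix_inv_eq_right_inverse:
  fixes A :: "'a::field ^ 'n ^ 'n"
  assumes "A ** B = mat 1"
  shows "matrix_inv A = B"
  unfolding matrix_inv_def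
proof (rule some_equality)
  show "A ** B = mat 1 \<and> B ** A = mat 1"
    using assms matrix_left_right_inverse by blast
next
  fix C assume "A ** C = mat 1 \<and> C ** A = mat 1"
  then have "C = C ** (A ** B)"
    using assms by (simp add: matrix_mul_rid)
  also have "\<dots> = B"
    using \<open>A ** C = mat 1 \<and> C ** A = mat 1\<close> by (simp add: matrix_mul_assoc matrix_mul_lid)
  finally show "C = B" .
qed

lemma matrix_inv_eq_adjugate2:
  fixes U :: "'a::field ^ 2 ^ 2"
  assumes "det U = 1"
  shows "matrix_inv U = adjugate2 U"
  using assms by (simp add: matrix_inv_eq_right_inverse matrix_mul_adjugate2)

section \<open>Coordinates of four-qubit vectors and matrices\<close>

definition qubit_bit :: "2 \<Rightarrow> nat" where
  "qubit_bit b = (if b = 0 then 0 else 1)"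

lemma qubit_bit_simps [simp]: "qubit_bit 0 = 0" "qubit_bit 1 = 1"
  by (simp_all add: qubit_bit_def)

definition basis_index :: "four_idx \<Rightarrow> nat" where
  "basis_index i = 8 * qubit_bit (fst (fst i)) + 4 * qubit_bit (fst (snd (fst i)))
                   + 2 * qubit_bit (snd (snd (fst i))) + qubit_bit (snd i)"

lemma forall_four_idx:
  "(\<forall>i::four_idx. P i) \<longleftrightarrow>
    P ((0,0,0),0) \<and> P ((0,0,0),1) \<and> P ((0,0,1),0) \<and> P ((0,0,1),1) \<and>
    P ((0,1,0),0) \<and> P ((0,1,0),1) \<and> P ((0,1,1),0) \<and> P ((0,1,1),1) \<and>
    P ((1,0,0),0) \<and> P ((1,0,0),1) \<and> P ((1,0,1),0) \<and> P ((1,0,1),1) \<and>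
    P ((1,1,0),0) \<and> P ((1,1,0),1) \<and> P ((1,1,1),0) \<and> P ((1,1,1),1)"
  by (simp add: split_paired_All forall_2_zero_one conj_ac)

lemma basis_index_less: "basis_index i < 16"
  by (simp add: basis_index_def qubit_bit_def)

lemma inj_basis_index: "inj basis_index"
  unfolding inj_def forall_four_idx by (simp add: basis_index_def)

lemma bij_betw_basis_index: "bij_betw basis_index UNIV {..<16}"
proof -
  have "basis_index ` UNIV \<subseteq> {..<16}"
    using basis_index_less by auto
  moreover have "card (basis_index ` UNIV) = card {..<16::nat}"
    using inj_basis_index by (simp add: card_image)
  ultimately show ?thesis
    using inj_basis_index by (simp add: bij_betw_def card_subset_eq)
qed

lemma sum_basis_index: "(\<Sum>j\<in>UNIV. f (basis_index j)) = (\<Sum>k<16. f k)"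
  using sum.reindex_bij_betw[OF bij_betw_basis_index, of f] by simp

definition vec_of_list :: "complex list \<Rightarrow> complex ^ four_idx" where
  "vec_of_list v = (\<chi> i. v ! basis_index i)"

definition mat_of_rows :: "complex list list \<Rightarrow> complex ^ four_idx ^ four_idx" where
  "mat_of_rows M = (\<chi> i j. M ! basis_index i ! basis_index j)"

definition is_16x16 :: "'a list list \<Rightarrow> bool" where
  "is_16x16 M \<longleftrightarrow> length M = 16 \<and> (\<forall>row \<in> set M. length row = 16)"

definition list_dot :: "'a::semiring_0 list \<Rightarrow> 'a list \<Rightarrow> 'a" where
  "list_dot a b = sum_list (map2 (*) a b)"

definition rows_mult_vec :: "'a::semiring_0 list list \<Rightarrow> 'a list \<Rightarrow> 'a list" where
  "rows_mult_vec M v = map (\<lambda>row. list_dot row v) M"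

lemma list_dot_eq_sum:
  "length a = n \<Longrightarrow> length b = n \<Longrightarrow> list_dot a b = (\<Sum>k<n. a ! k * b ! k)"
proof (induction a arbitrary: b n)
  case Nil
  then show ?case by (simp add: list_dot_def)
next
  case (Cons x xs)
  then obtain y ys where "b = y # ys" "n = Suc (length xs)"
    by (cases b) auto
  with Cons show ?case
    by (simp del: sum.lessThan_Suc add: list_dot_def sum.lessThan_Suc_shift)
qed

lemma length_rows_mult_vec [simp]: "length (rows_mult_vec M v) = length M"
  by (simp add: rows_mult_vec_def)

lemma length_if_is_16x16: "is_16x16 M \<Longrightarrow> length M = 16"
  by (simp add: is_16x16_def)

lemma mat_of_rows_mult_vec_of_list:
  assumes "is_16x16 M" and "length v = 16"
  shows "mat_of_rows M *v vec_of_list v = vec_of_list (rows_mult_vec M v)"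
proof -
  have "(mat_of_rows M *v vec_of_list v) $ i = vec_of_list (rows_mult_vec M v) $ i" for i
  proof -
    have "(mat_of_rows M *v vec_of_list v) $ i
          = (\<Sum>j\<in>UNIV. M ! basis_index i ! basis_index j * v ! basis_index j)"
      by (simp add: matrix_vector_mult_def mat_of_rows_def vec_of_list_def)
    also have "\<dots> = (\<Sum>k<16. M ! basis_index i ! k * v ! k)"
      by (rule sum_basis_index)
    also have "\<dots> = list_dot (M ! basis_index i) v"
      using assms basis_index_less[of i] by (simp add: list_dot_eq_sum is_16x16_def)
    finally show ?thesis
      using assms basis_index_less[of i]
      by (simp add: vec_of_list_def rows_mult_vec_def is_16x16_def)
  qed
  then show ?thesis by (simp add: vec_eq_iff)
qed

definition gram_rows :: "complex list list \<Rightarrow> complex list list" where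
  "gram_rows A = map (\<lambda>a. map (\<lambda>b. list_dot a (map cnj b)) A) A"

definition identity_rows_16 :: "complex list list" where
  "identity_rows_16 = map (\<lambda>i. map (\<lambda>j. if i = j then 1 else 0) [0..<16]) [0..<16]"

lemma mat_of_rows_mult_cadjoint:
  assumes "is_16x16 A"
  shows "mat_of_rows A ** cadjoint (mat_of_rows A) = mat_of_rows (gram_rows A)"
proof -
  have "(mat_of_rows A ** cadjoint (mat_of_rows A)) $ i $ j = mat_of_rows (gram_rows A) $ i $ j"
    for i j
  proof -
    let ?a = "A ! basis_index i" and ?b = "A ! basis_index j"
    have "(mat_of_rows A ** cadjoint (mat_of_rows A)) $ i $ j
          = (\<Sum>k\<in>UNIV. ?a ! basis_index k * cnj (?b ! basis_index k))"
      by (simp add: matrix_matrix_mult_def cadjoint_def mat_of_rows_def)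
    also have "\<dots> = (\<Sum>k<16. ?a ! k * cnj (?b ! k))"
      by (rule sum_basis_index)
    also have "\<dots> = (\<Sum>k<16. ?a ! k * map cnj ?b ! k)"
      using assms basis_index_less[of j] by (intro sum.cong) (auto simp: is_16x16_def)
    also have "\<dots> = list_dot ?a (map cnj ?b)"
      using assms basis_index_less[of i] basis_index_less[of j]
      by (simp add: list_dot_eq_sum is_16x16_def)
    finally show ?thesis
      using assms basis_index_less[of i] basis_index_less[of j]
      by (simp add: mat_of_rows_def gram_rows_def is_16x16_def)
  qed
  then show ?thesis by (simp add: vec_eq_iff)
qed

lemma mat_one_eq_mat_of_rows: "mat 1 = mat_of_rows identity_rows_16"
  using basis_index_less inj_basis_index
  by (auto simp: vec_eq_iff mat_def mat_of_rows_def identity_rows_16_def inj_eq)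

lemma cunitary_if_mult_cadjoint:
  fixes A :: "complex ^ 'n ^ 'n"
  assumes "A ** cadjoint A = mat 1"
  shows "cunitary A"
  using assms matrix_left_right_inverse by (auto simp: cunitary_def)

lemma cunitary_mat_of_rows:
  assumes "is_16x16 A" and "gram_rows A = identity_rows_16"
  shows "cunitary (mat_of_rows A)"
  using assms
  by (intro cunitary_if_mult_cadjoint) (simp add: mat_of_rows_mult_cadjoint mat_one_eq_mat_of_rows)

section \<open>The circuit\<close>

definition sqrt2 :: complex where
  "sqrt2 = of_real (sqrt 2)"

definition sqrt3 :: complex where
  "sqrt3 = of_real (sqrt 3)"

lemma sqrt2_times_sqrt2: "sqrt2 * sqrt2 = 2" "sqrt2 * (sqrt2 * z) = 2 * z"
  by (simp_all add: sqrt2_def mult.assoc [symmetric] flip: of_real_mult)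

lemma sqrt3_times_sqrt3: "sqrt3 * sqrt3 = 3" "sqrt3 * (sqrt3 * z) = 3 * z"
  by (simp_all add: sqrt3_def mult.assoc [symmetric] flip: of_real_mult)

lemma cnj_sqrt2 [simp]: "cnj sqrt2 = sqrt2"
  by (simp add: sqrt2_def)

lemma cnj_sqrt3 [simp]: "cnj sqrt3 = sqrt3"
  by (simp add: sqrt3_def)

definition gate0_rows :: "complex list list" where
  "gate0_rows =
   [[0, 0, 0, 0, 0, 0, 0, 0, 0, 1, 0, 0, 0, 0, 0, 0],
    [sqrt2/2, 0, 0, 0, sqrt2/2, 0, 0, 0, 0, 0, 0, 0, 0, 0, 0, 0],
    [0, 0, 1, 0, 0, 0, 0, 0, 0, 0, 0, 0, 0, 0, 0, 0],
    [0, 0, 0, 1, 0, 0, 0, 0, 0, 0, 0, 0, 0, 0, 0, 0],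
    [-sqrt2/2, 0, 0, 0, sqrt2/2, 0, 0, 0, 0, 0, 0, 0, 0, 0, 0, 0],
    [0, 0, 0, 0, 0, 1, 0, 0, 0, 0, 0, 0, 0, 0, 0, 0],
    [0, 0, 0, 0, 0, 0, 1, 0, 0, 0, 0, 0, 0, 0, 0, 0],
    [0, 0, 0, 0, 0, 0, 0, 1, 0, 0, 0, 0, 0, 0, 0, 0],
    [0, 0, 0, 0, 0, 0, 0, 0, 1, 0, 0, 0, 0, 0, 0, 0],
    [0, sqrt2/2, 0, 0, 0, 0, 0, 0, 0, 0, 0, 0, sqrt2/2, 0, 0, 0],
    [0, 0, 0, 0, 0, 0, 0, 0, 0, 0, 1, 0, 0, 0, 0, 0],
    [0, 0, 0, 0, 0, 0, 0, 0, 0, 0, 0, 1, 0, 0, 0, 0],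
    [0, -sqrt2/2, 0, 0, 0, 0, 0, 0, 0, 0, 0, 0, sqrt2/2, 0, 0, 0],
    [0, 0, 0, 0, 0, 0, 0, 0, 0, 0, 0, 0, 0, 1, 0, 0],
    [0, 0, 0, 0, 0, 0, 0, 0, 0, 0, 0, 0, 0, 0, 1, 0],
    [0, 0, 0, 0, 0, 0, 0, 0, 0, 0, 0, 0, 0, 0, 0, 1]]"

definition gate1_rows :: "complex list list" where
  "gate1_rows =
   [[-1, 0, 0, 0, 0, 0, 0, 0, 0, 0, 0, 0, 0, 0, 0, 0],
    [0, 0, 0, 0, -1, 0, 0, 0, 0, 0, 0, 0, 0, 0, 0, 0],
    [0, 0, 1, 0, 0, 0, 0, 0, 0, 0, 0, 0, 0, 0, 0, 0],
    [0, sqrt3/3, 0, 1/3, 0, 0, 1/3, 0, -sqrt3/3, 0, 1/3, 0, 0, 0, 0, 0],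
    [0, -1/2, 0, -sqrt3/6, 0, 0, sqrt3/3, 0, -1/2, 0, -sqrt3/6, 0, 0, 0, 0, 0],
    [0, 0, 0, 0, 0, -1/2, 0, sqrt3/6, 0, 0, 0, -sqrt3/3, -1/2, 0, sqrt3/6, 0],
    [0, -sqrt3/6, 0, -1/6, 0, 0, 1/3, 0, sqrt3/6, 0, 5/6, 0, 0, 0, 0, 0],
    [0, 0, 0, 0, 0, sqrt3/6, 0, -1/6, 0, 0, 0, 1/3, -sqrt3/6, 0, 5/6, 0],
    [0, -1/2, 0, sqrt3/6, 0, 0, -sqrt3/3, 0, -1/2, 0, sqrt3/6, 0, 0, 0, 0, 0],
    [0, 0, 0, 0, 0, -1/2, 0, -sqrt3/6, 0, 0, 0, sqrt3/3, -1/2, 0, -sqrt3/6, 0],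
    [0, -sqrt3/6, 0, 5/6, 0, 0, 1/3, 0, sqrt3/6, 0, -1/6, 0, 0, 0, 0, 0],
    [0, 0, 0, 0, 0, sqrt3/6, 0, 5/6, 0, 0, 0, 1/3, -sqrt3/6, 0, -1/6, 0],
    [0, 0, 0, 0, 0, 0, 0, 0, 0, -1, 0, 0, 0, 0, 0, 0],
    [0, 0, 0, 0, 0, 0, 0, 0, 0, 0, 0, 0, 0, -1, 0, 0],
    [0, 0, 0, 0, 0, -sqrt3/3, 0, 1/3, 0, 0, 0, 1/3, sqrt3/3, 0, 1/3, 0],
    [0, 0, 0, 0, 0, 0, 0, 0, 0, 0, 0, 0, 0, 0, 0, 1]]"

definition gate2_rows :: "complex list list" where
  "gate2_rows =
   [[1, 0, 0, 0, 0, 0, 0, 0, 0, 0, 0, 0, 0, 0, 0, 0],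
    [0, 1/3, 0, 0, 1/3 - sqrt3/3, 0, 0, 0, 1/3 + sqrt3/3, 0, 0, 0, 0, 0, 0, 0],
    [0, 0, 1, 0, 0, 0, 0, 0, 0, 0, 0, 0, 0, 0, 0, 0],
    [0, -sqrt3/3, 0, 0, sqrt3/6, 0, 1/2, 0, sqrt3/6, 0, 1/2, 0, 0, 0, 0, 0],
    [0, 1/3 + sqrt3/6, 0, -1/2, 1/3 + sqrt3/12, 0, 1/4, 0, 1/3 - sqrt3/4, 0, 1/4, 0, 0, 0, 0, 0],
    [0, 0, 0, 0, 0, 1/3 - sqrt3/12, 0, -1/4, 0, 1/3 + sqrt3/4, 0, -1/4, 1/3 - sqrt3/6, 0, 1/2, 0],
    [0, sqrt3/6, 0, 1/2, -sqrt3/12, 0, 3/4, 0, -sqrt3/12, 0, -1/4, 0, 0, 0, 0, 0],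
    [0, 0, 0, 0, 0, -sqrt3/12, 0, 3/4, 0, -sqrt3/12, 0, -1/4, sqrt3/6, 0, 1/2, 0],
    [0, 1/3 - sqrt3/6, 0, 1/2, 1/3 + sqrt3/4, 0, -1/4, 0, 1/3 - sqrt3/12, 0, -1/4, 0, 0, 0, 0, 0],
    [0, 0, 0, 0, 0, 1/3 - sqrt3/4, 0, 1/4, 0, 1/3 + sqrt3/12, 0, 1/4, 1/3 + sqrt3/6, 0, -1/2, 0],
    [0, sqrt3/6, 0, 1/2, -sqrt3/12, 0, -1/4, 0, -sqrt3/12, 0, 3/4, 0, 0, 0, 0, 0],
    [0, 0, 0, 0, 0, -sqrt3/12, 0, -1/4, 0, -sqrt3/12, 0, 3/4, sqrt3/6, 0, 1/2, 0],
    [0, 0, 0, 0, 0, 1/3 + sqrt3/3, 0, 0, 0, 1/3 - sqrt3/3, 0, 0, 1/3, 0, 0, 0],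
    [0, 0, 0, 0, 0, 0, 0, 0, 0, 0, 0, 0, 0, 1, 0, 0],
    [0, 0, 0, 0, 0, sqrt3/6, 0, 1/2, 0, sqrt3/6, 0, 1/2, -sqrt3/3, 0, 0, 0],
    [0, 0, 0, 0, 0, 0, 0, 0, 0, 0, 0, 0, 0, 0, 0, 1]]"

definition gate3_rows :: "complex list list" where
  "gate3_rows =
   [[1, 0, 0, 0, 0, 0, 0, 0, 0, 0, 0, 0, 0, 0, 0, 0],
    [0, 1/3, 0, -sqrt3/3, 1/3 - sqrt3/6, 0, sqrt3/6, 0, 1/3 + sqrt3/6, 0, sqrt3/6, 0, 0, 0, 0, 0],
    [0, 0, 1, 0, 0, 0, 0, 0, 0, 0, 0, 0, 0, 0, 0, 0],
    [0, 0, 0, 0, 1/2, 0, 1/2, 0, -1/2, 0, 1/2, 0, 0, 0, 0, 0],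
    [0, 1/3, 0, sqrt3/6, 1/3 + sqrt3/12, 0, 1/2 - sqrt3/12, 0, 1/3 - sqrt3/12, 0, -1/2 - sqrt3/12, 0, 0, 0, 0, 0],
    [0, 0, 0, 0, 0, 1/3 - sqrt3/12, 0, 1/2 - sqrt3/12, 0, 1/3 + sqrt3/12, 0, -1/2 - sqrt3/12, 1/3, 0, sqrt3/6, 0],
    [0, -sqrt3/3, 0, 1/2, -1/4 + sqrt3/6, 0, 1/4, 0, 1/4 + sqrt3/6, 0, 1/4, 0, 0, 0, 0, 0],
    [0, 0, 0, 0, 0, 1/4 - sqrt3/6, 0, 1/4, 0, -1/4 - sqrt3/6, 0, 1/4, sqrt3/3, 0, 1/2, 0],
    [0, 1/3, 0, sqrt3/6, 1/3 + sqrt3/12, 0, -1/2 - sqrt3/12, 0, 1/3 - sqrt3/12, 0, 1/2 - sqrt3/12, 0, 0, 0, 0, 0],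
    [0, 0, 0, 0, 0, 1/3 - sqrt3/12, 0, -1/2 - sqrt3/12, 0, 1/3 + sqrt3/12, 0, 1/2 - sqrt3/12, 1/3, 0, sqrt3/6, 0],
    [0, sqrt3/3, 0, 1/2, -1/4 - sqrt3/6, 0, 1/4, 0, 1/4 - sqrt3/6, 0, 1/4, 0, 0, 0, 0, 0],
    [0, 0, 0, 0, 0, 1/4 + sqrt3/6, 0, 1/4, 0, -1/4 + sqrt3/6, 0, 1/4, -sqrt3/3, 0, 1/2, 0],
    [0, 0, 0, 0, 0, 1/3 + sqrt3/6, 0, sqrt3/6, 0, 1/3 - sqrt3/6, 0, sqrt3/6, 1/3, 0, -sqrt3/3, 0],
    [0, 0, 0, 0, 0, 0, 0, 0, 0, 0, 0, 0, 0, 1, 0, 0],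
    [0, 0, 0, 0, 0, -1/2, 0, 1/2, 0, 1/2, 0, 1/2, 0, 0, 0, 0],
    [0, 0, 0, 0, 0, 0, 0, 0, 0, 0, 0, 0, 0, 0, 0, 1]]"

definition gate4_rows :: "complex list list" where
  "gate4_rows =
   [[-1, 0, 0, 0, 0, 0, 0, 0, 0, 0, 0, 0, 0, 0, 0, 0],
    [0, 0, 0, sqrt3/3, -1/2, 0, -sqrt3/6, 0, -1/2, 0, -sqrt3/6, 0, 0, 0, 0, 0],
    [0, 0, 1, 0, 0, 0, 0, 0, 0, 0, 0, 0, 0, 0, 0, 0],
    [0, 0, 0, 1/3, -sqrt3/6, 0, -1/6, 0, sqrt3/6, 0, 5/6, 0, 0, 0, 0, 0],
    [0, -1, 0, 0, 0, 0, 0, 0, 0, 0, 0, 0, 0, 0, 0, 0],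
    [0, 0, 0, 0, 0, -1/2, 0, sqrt3/6, 0, -1/2, 0, sqrt3/6, 0, 0, -sqrt3/3, 0],
    [0, 0, 0, 1/3, sqrt3/3, 0, 1/3, 0, -sqrt3/3, 0, 1/3, 0, 0, 0, 0, 0],
    [0, 0, 0, 0, 0, sqrt3/6, 0, -1/6, 0, -sqrt3/6, 0, 5/6, 0, 0, 1/3, 0],
    [0, 0, 0, -sqrt3/3, -1/2, 0, sqrt3/6, 0, -1/2, 0, sqrt3/6, 0, 0, 0, 0, 0],
    [0, 0, 0, 0, 0, 0, 0, 0, 0, 0, 0, 0, -1, 0, 0, 0],
    [0, 0, 0, 1/3, -sqrt3/6, 0, 5/6, 0, sqrt3/6, 0, -1/6, 0, 0, 0, 0, 0],
    [0, 0, 0, 0, 0, -sqrt3/3, 0, 1/3, 0, sqrt3/3, 0, 1/3, 0, 0, 1/3, 0],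
    [0, 0, 0, 0, 0, -1/2, 0, -sqrt3/6, 0, -1/2, 0, -sqrt3/6, 0, 0, sqrt3/3, 0],
    [0, 0, 0, 0, 0, 0, 0, 0, 0, 0, 0, 0, 0, -1, 0, 0],
    [0, 0, 0, 0, 0, sqrt3/6, 0, 5/6, 0, -sqrt3/6, 0, -1/6, 0, 0, 1/3, 0],
    [0, 0, 0, 0, 0, 0, 0, 0, 0, 0, 0, 0, 0, 0, 0, 1]]"

definition gate5_rows :: "complex list list" where
  "gate5_rows =
   [[0, sqrt2/2, 0, 0, -sqrt2/2, 0, 0, 0, 0, 0, 0, 0, 0, 0, 0, 0],
    [0, 0, 0, 0, 0, 0, 0, 0, 0, sqrt2/2, 0, 0, -sqrt2/2, 0, 0, 0],
    [0, 0, 1, 0, 0, 0, 0, 0, 0, 0, 0, 0, 0, 0, 0, 0],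
    [0, 0, 0, 1, 0, 0, 0, 0, 0, 0, 0, 0, 0, 0, 0, 0],
    [0, sqrt2/2, 0, 0, sqrt2/2, 0, 0, 0, 0, 0, 0, 0, 0, 0, 0, 0],
    [0, 0, 0, 0, 0, 1, 0, 0, 0, 0, 0, 0, 0, 0, 0, 0],
    [0, 0, 0, 0, 0, 0, 1, 0, 0, 0, 0, 0, 0, 0, 0, 0],
    [0, 0, 0, 0, 0, 0, 0, 1, 0, 0, 0, 0, 0, 0, 0, 0],
    [0, 0, 0, 0, 0, 0, 0, 0, 1, 0, 0, 0, 0, 0, 0, 0],
    [1, 0, 0, 0, 0, 0, 0, 0, 0, 0, 0, 0, 0, 0, 0, 0],
    [0, 0, 0, 0, 0, 0, 0, 0, 0, 0, 1, 0, 0, 0, 0, 0],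
    [0, 0, 0, 0, 0, 0, 0, 0, 0, 0, 0, 1, 0, 0, 0, 0],
    [0, 0, 0, 0, 0, 0, 0, 0, 0, sqrt2/2, 0, 0, sqrt2/2, 0, 0, 0],
    [0, 0, 0, 0, 0, 0, 0, 0, 0, 0, 0, 0, 0, 1, 0, 0],
    [0, 0, 0, 0, 0, 0, 0, 0, 0, 0, 0, 0, 0, 0, 1, 0],
    [0, 0, 0, 0, 0, 0, 0, 0, 0, 0, 0, 0, 0, 0, 0, 1]]"

definition ancilla_rows :: "complex \<Rightarrow> complex \<Rightarrow> complex \<Rightarrow> complex \<Rightarrow> complex list list" where
  "ancilla_rows a b c d =
   [[a, b, 0, 0, 0, 0, 0, 0, 0, 0, 0, 0, 0, 0, 0, 0],
    [c, d, 0, 0, 0, 0, 0, 0, 0, 0, 0, 0, 0, 0, 0, 0],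
    [0, 0, a, b, 0, 0, 0, 0, 0, 0, 0, 0, 0, 0, 0, 0],
    [0, 0, c, d, 0, 0, 0, 0, 0, 0, 0, 0, 0, 0, 0, 0],
    [0, 0, 0, 0, a, b, 0, 0, 0, 0, 0, 0, 0, 0, 0, 0],
    [0, 0, 0, 0, c, d, 0, 0, 0, 0, 0, 0, 0, 0, 0, 0],
    [0, 0, 0, 0, 0, 0, a, b, 0, 0, 0, 0, 0, 0, 0, 0],
    [0, 0, 0, 0, 0, 0, c, d, 0, 0, 0, 0, 0, 0, 0, 0],
    [0, 0, 0, 0, 0, 0, 0, 0, a, b, 0, 0, 0, 0, 0, 0],
    [0, 0, 0, 0, 0, 0, 0, 0, c, d, 0, 0, 0, 0, 0, 0],
    [0, 0, 0, 0, 0, 0, 0, 0, 0, 0, a, b, 0, 0, 0, 0],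
    [0, 0, 0, 0, 0, 0, 0, 0, 0, 0, c, d, 0, 0, 0, 0],
    [0, 0, 0, 0, 0, 0, 0, 0, 0, 0, 0, 0, a, b, 0, 0],
    [0, 0, 0, 0, 0, 0, 0, 0, 0, 0, 0, 0, c, d, 0, 0],
    [0, 0, 0, 0, 0, 0, 0, 0, 0, 0, 0, 0, 0, 0, a, b],
    [0, 0, 0, 0, 0, 0, 0, 0, 0, 0, 0, 0, 0, 0, c, d]]"

lemma is_16x16_circuit_rows:
  "is_16x16 gate0_rows" "is_16x16 gate1_rows" "is_16x16 gate2_rows"
  "is_16x16 gate3_rows" "is_16x16 gate4_rows" "is_16x16 gate5_rows"
  "is_16x16 (ancilla_rows a b c d)"
  by (simp_all add: is_16x16_def gate0_rows_def gate1_rows_def gate2_rows_def gate3_rows_def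
      gate4_rows_def gate5_rows_def ancilla_rows_def)

lemma cunitary_gates:
  "cunitary (mat_of_rows gate0_rows)" "cunitary (mat_of_rows gate1_rows)"
  "cunitary (mat_of_rows gate2_rows)" "cunitary (mat_of_rows gate3_rows)"
  "cunitary (mat_of_rows gate4_rows)" "cunitary (mat_of_rows gate5_rows)"
  by (intro cunitary_mat_of_rows is_16x16_circuit_rows,
      simp add: gram_rows_def list_dot_def identity_rows_16_def upt_rec
        gate0_rows_def gate1_rows_def gate2_rows_def gate3_rows_def gate4_rows_def gate5_rows_def
        field_simps sqrt2_times_sqrt2 sqrt3_times_sqrt3)+

text \<open>\<open>stage k\<close> is the state after the first \<open>k + 1\<close> gates, \<open>W\<^sub>0\<close> first and each call of
  \<open>U = [[a, b], [c, d]]\<close> counting as a gate, on the input \<open>|000\<rangle> \<otimes> (x, y)\<close>; the factor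
  \<open>\<surd>2/12\<close> keeps the listed coefficients integral.\<close>

definition stage0 :: "complex \<Rightarrow> complex \<Rightarrow> complex list" where
  "stage0 x y =
    map ((*) (sqrt2/12))
    [0, 6 * x,
     0, 0,
     -6 * x, 0,
     0, 0,
     0, 6 * y,
     0, 0,
     -6 * y, 0,
     0, 0]"

definition stage1 ::
  "complex \<Rightarrow> complex \<Rightarrow> complex \<Rightarrow> complex \<Rightarrow> complex \<Rightarrow> complex \<Rightarrow> complex list" where
  "stage1 a b c d x y =
    map ((*) (sqrt2/12))
    [6 * b*x, 6 * d*x,
     0, 0,
     -6 * a*x, -6 * c*x,
     0, 0,
     6 * b*y, 6 * d*y,
     0, 0,
     -6 * a*y, -6 * c*y,
     0, 0]"

definition stage2 ::
  "complex \<Rightarrow> complex \<Rightarrow> complex \<Rightarrow> complex \<Rightarrow> complex \<Rightarrow> complex \<Rightarrow> complex list" where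
  "stage2 a b c d x y =
    map ((*) (sqrt2/12))
    [-6 * b*x, 6 * a*x,
     0, -2 * sqrt3 * (b*y - d*x),
     -3 * (b*y + d*x), 3 * (a*y + c*x),
     sqrt3 * (b*y - d*x), sqrt3 * (a*y - c*x),
     -3 * (b*y + d*x), 3 * (a*y + c*x),
     sqrt3 * (b*y - d*x), sqrt3 * (a*y - c*x),
     -6 * d*y, 6 * c*y,
     -2 * sqrt3 * (a*y - c*x), 0]"

definition stage3 ::
  "complex \<Rightarrow> complex \<Rightarrow> complex \<Rightarrow> complex \<Rightarrow> complex \<Rightarrow> complex \<Rightarrow> complex list" where
  "stage3 a b c d x y = (let \<delta> = a*d - b*c in
    map ((*) (sqrt2/12))
    [0, 6 * \<delta> * x,
     -2 * sqrt3 * b * (b*y - d*x), -2 * sqrt3 * d * (b*y - d*x),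
     -3 * \<delta> * x, 3 * \<delta> * y,
     sqrt3 * (2*a*b*y - a*d*x - b*c*x), sqrt3 * (a*d*y + b*c*y - 2*c*d*x),
     -3 * \<delta> * x, 3 * \<delta> * y,
     sqrt3 * (2*a*b*y - a*d*x - b*c*x), sqrt3 * (a*d*y + b*c*y - 2*c*d*x),
     -6 * \<delta> * y, 0,
     -2 * sqrt3 * a * (a*y - c*x), -2 * sqrt3 * c * (a*y - c*x)])"

definition stage4 ::
  "complex \<Rightarrow> complex \<Rightarrow> complex \<Rightarrow> complex \<Rightarrow> complex \<Rightarrow> complex \<Rightarrow> complex list" where
  "stage4 a b c d x y =
    map ((*) (sqrt2/12))
    [0, 0,
     -2 * sqrt3 * b * (b*y - d*x), 2 * sqrt3 * (a*b*y - 2*a*d*x + b*c*x),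
     sqrt3 * (a*b*y + a*d*x - 2*b*c*x + b*d*y - d^2*x), -sqrt3 * (a^2*y - a*c*x - a*d*y + 2*b*c*y - c*d*x),
     sqrt3 * (a*b*y + a*d*x - 2*b*c*x - b*d*y + d^2*x), -sqrt3 * (a^2*y - a*c*x + a*d*y - 2*b*c*y + c*d*x),
     -sqrt3 * (a*b*y + a*d*x - 2*b*c*x + b*d*y - d^2*x), sqrt3 * (a^2*y - a*c*x - a*d*y + 2*b*c*y - c*d*x),
     sqrt3 * (a*b*y + a*d*x - 2*b*c*x - b*d*y + d^2*x), -sqrt3 * (a^2*y - a*c*x + a*d*y - 2*b*c*y + c*d*x),
     0, 0,
     2 * sqrt3 * (2*a*d*y - b*c*y - c*d*x), -2 * sqrt3 * c * (a*y - c*x)]"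

definition stage5 ::
  "complex \<Rightarrow> complex \<Rightarrow> complex \<Rightarrow> complex \<Rightarrow> complex \<Rightarrow> complex \<Rightarrow> complex list" where
  "stage5 a b c d x y = (let \<delta> = a*d - b*c in
    map ((*) (sqrt2/12))
    [0, 0,
     -2 * sqrt3 * \<delta> * b*x, 2 * sqrt3 * \<delta> * (b*y - 2*d*x),
     sqrt3 * \<delta> * (a*x + 2*b*y - d*x), -sqrt3 * \<delta> * (a*y - 2*c*x - d*y),
     sqrt3 * \<delta> * (a*x - 2*b*y + d*x), -sqrt3 * \<delta> * (a*y - 2*c*x + d*y),
     -sqrt3 * \<delta> * (a*x + 2*b*y - d*x), sqrt3 * \<delta> * (a*y - 2*c*x - d*y),
     sqrt3 * \<delta> * (a*x - 2*b*y + d*x), -sqrt3 * \<delta> * (a*y - 2*c*x + d*y),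
     0, 0,
     2 * sqrt3 * \<delta> * (2*a*y - c*x), 2 * sqrt3 * \<delta> * c*y])"

definition stage6 ::
  "complex \<Rightarrow> complex \<Rightarrow> complex \<Rightarrow> complex \<Rightarrow> complex \<Rightarrow> complex \<Rightarrow> complex list" where
  "stage6 a b c d x y = (let \<delta> = a*d - b*c in
    map ((*) (sqrt2/12))
    [0, -6 * \<delta> * (b*y - d*x),
     -2 * sqrt3 * \<delta> * b*x, 2 * sqrt3 * \<delta> * a*x,
     3 * \<delta> * (b*y - d*x), 3 * \<delta> * (a*y - c*x),
     -sqrt3 * \<delta> * (b*y + d*x), sqrt3 * \<delta> * (a*y + c*x),
     3 * \<delta> * (b*y - d*x), 3 * \<delta> * (a*y - c*x),
     -sqrt3 * \<delta> * (b*y + d*x), sqrt3 * \<delta> * (a*y + c*x),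
     -6 * \<delta> * (a*y - c*x), 0,
     -2 * sqrt3 * \<delta> * d*y, 2 * sqrt3 * \<delta> * c*y])"

definition stage7 ::
  "complex \<Rightarrow> complex \<Rightarrow> complex \<Rightarrow> complex \<Rightarrow> complex \<Rightarrow> complex \<Rightarrow> complex list" where
  "stage7 a b c d x y = (let \<delta> = a*d - b*c in
    map ((*) (sqrt2/12))
    [-6 * \<delta> * b * (b*y - d*x), -6 * \<delta> * d * (b*y - d*x),
     0, 2 * sqrt3 * \<delta>^2 * x,
     3 * \<delta> * (2*a*b*y - a*d*x - b*c*x), 3 * \<delta> * (a*d*y + b*c*y - 2*c*d*x),
     -sqrt3 * \<delta>^2 * x, sqrt3 * \<delta>^2 * y,
     3 * \<delta> * (2*a*b*y - a*d*x - b*c*x), 3 * \<delta> * (a*d*y + b*c*y - 2*c*d*x),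
     -sqrt3 * \<delta>^2 * x, sqrt3 * \<delta>^2 * y,
     -6 * \<delta> * a * (a*y - c*x), -6 * \<delta> * c * (a*y - c*x),
     -2 * sqrt3 * \<delta>^2 * y, 0])"

definition stage8 ::
  "complex \<Rightarrow> complex \<Rightarrow> complex \<Rightarrow> complex \<Rightarrow> complex \<Rightarrow> complex \<Rightarrow> complex list" where
  "stage8 a b c d x y = (let \<delta> = a*d - b*c in
    map ((*) (sqrt2/12))
    [6 * \<delta> * b * (b*y - d*x), -6 * \<delta> * a * (b*y - d*x),
     0, 0,
     6 * \<delta> * d * (b*y - d*x), -6 * \<delta> * c * (b*y - d*x),
     0, 0,
     -6 * \<delta> * b * (a*y - c*x), 6 * \<delta> * a * (a*y - c*x),
     0, 0,
     -6 * \<delta> * d * (a*y - c*x), 6 * \<delta> * c * (a*y - c*x),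
     0, 0])"

definition stage9 ::
  "complex \<Rightarrow> complex \<Rightarrow> complex \<Rightarrow> complex \<Rightarrow> complex \<Rightarrow> complex \<Rightarrow> complex list" where
  "stage9 a b c d x y = (let \<delta> = a*d - b*c in
    map ((*) (sqrt2/12))
    [0, -6 * \<delta>^2 * (b*y - d*x),
     0, 0,
     6 * \<delta>^2 * (b*y - d*x), 0,
     0, 0,
     0, 6 * \<delta>^2 * (a*y - c*x),
     0, 0,
     -6 * \<delta>^2 * (a*y - c*x), 0,
     0, 0])"

lemma circuit_stages:
  "rows_mult_vec gate0_rows [x, y, 0, 0, 0, 0, 0, 0, 0, 0, 0, 0, 0, 0, 0, 0] = stage0 x y"
  "rows_mult_vec (ancilla_rows a b c d) (stage0 x y) = stage1 a b c d x y"
  "rows_mult_vec gate1_rows (stage1 a b c d x y) = stage2 a b c d x y"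
  "rows_mult_vec (ancilla_rows a b c d) (stage2 a b c d x y) = stage3 a b c d x y"
  "rows_mult_vec gate2_rows (stage3 a b c d x y) = stage4 a b c d x y"
  "rows_mult_vec (ancilla_rows a b c d) (stage4 a b c d x y) = stage5 a b c d x y"
  "rows_mult_vec gate3_rows (stage5 a b c d x y) = stage6 a b c d x y"
  "rows_mult_vec (ancilla_rows a b c d) (stage6 a b c d x y) = stage7 a b c d x y"
  "rows_mult_vec gate4_rows (stage7 a b c d x y) = stage8 a b c d x y"
  "rows_mult_vec (ancilla_rows a b c d) (stage8 a b c d x y) = stage9 a b c d x y"
  "rows_mult_vec gate5_rows (stage9 a b c d x y)
     = [(a*d - b*c)^2 * (d*x - b*y), (a*d - b*c)^2 * (a*y - c*x), 0, 0, 0, 0, 0, 0, 0, 0, 0, 0, 0, 0, 0, 0]"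
  unfolding rows_mult_vec_def list_dot_def Let_def
    stage0_def stage1_def stage2_def stage3_def stage4_def stage5_def stage6_def stage7_def
    stage8_def stage9_def ancilla_rows_def
    gate0_rows_def gate1_rows_def gate2_rows_def gate3_rows_def gate4_rows_def gate5_rows_def
  by (simp_all add: field_simps power2_eq_square sqrt2_times_sqrt2 sqrt3_times_sqrt3)

lemma circuit_rows_apply:
  "rows_mult_vec gate5_rows (rows_mult_vec (ancilla_rows a b c d)
    (rows_mult_vec gate4_rows (rows_mult_vec (ancilla_rows a b c d)
    (rows_mult_vec gate3_rows (rows_mult_vec (ancilla_rows a b c d)
    (rows_mult_vec gate2_rows (rows_mult_vec (ancilla_rows a b c d)
    (rows_mult_vec gate1_rows (rows_mult_vec (ancilla_rows a b c d)
    (rows_mult_vec gate0_rows [x, y, 0, 0, 0, 0, 0, 0, 0, 0, 0, 0, 0, 0, 0, 0]))))))))))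
   = [(a*d - b*c)^2 * (d*x - b*y), (a*d - b*c)^2 * (a*y - c*x), 0, 0, 0, 0, 0, 0, 0, 0, 0, 0, 0, 0, 0, 0]"
  by (simp only: circuit_stages)

lemma anc_id_kron_eq_mat_of_rows:
  "anc_id_kron U = mat_of_rows (ancilla_rows (U$0$0) (U$0$1) (U$1$0) (U$1$1))"
  unfolding vec_eq_iff forall_four_idx
  by (simp add: anc_id_kron_def kron_def mat_def mat_of_rows_def ancilla_rows_def basis_index_def)

lemma vkron_ket000_eq_vec_of_list:
  "vkron ket000 \<psi> = vec_of_list [\<psi>$0, \<psi>$1, 0, 0, 0, 0, 0, 0, 0, 0, 0, 0, 0, 0, 0, 0]"
  unfolding vec_eq_iff forall_four_idx
  by (simp add: vkron_def ket000_def axis_def vec_of_list_def basis_index_def)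

definition inversion_circuit :: "complex ^ 2 ^ 2 \<Rightarrow> complex ^ four_idx ^ four_idx" where
  "inversion_circuit U =
    mat_of_rows gate5_rows ** anc_id_kron U ** mat_of_rows gate4_rows ** anc_id_kron U **
    mat_of_rows gate3_rows ** anc_id_kron U ** mat_of_rows gate2_rows ** anc_id_kron U **
    mat_of_rows gate1_rows ** anc_id_kron U ** mat_of_rows gate0_rows"

lemma inversion_circuit_apply:
  "inversion_circuit U *v vkron ket000 \<psi> = vkron ket000 ((det U)\<^sup>2 *s (adjugate2 U *v \<psi>))"
proof -
  have "inversion_circuit U *v vkron ket000 \<psi>
        = vec_of_list [(U$0$0 * U$1$1 - U$0$1 * U$1$0)\<^sup>2 * (U$1$1 * \<psi>$0 - U$0$1 * \<psi>$1),
                       (U$0$0 * U$1$1 - U$0$1 * U$1$0)\<^sup>2 * (U$0$0 * \<psi>$1 - U$1$0 * \<psi>$0),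
                       0, 0, 0, 0, 0, 0, 0, 0, 0, 0, 0, 0, 0, 0]"
    by (simp add: inversion_circuit_def anc_id_kron_eq_mat_of_rows vkron_ket000_eq_vec_of_list
        mat_of_rows_mult_vec_of_list is_16x16_circuit_rows length_if_is_16x16 circuit_rows_apply
        flip: matrix_vector_mul_assoc)
  also have "\<dots> = vkron ket000 ((det U)\<^sup>2 *s (adjugate2 U *v \<psi>))"
    by (simp add: vkron_ket000_eq_vec_of_list adjugate2_def matrix_vector_mult_def sum_2_zero_one
        det_2 two_eq_zero_in_2 algebra_simps)
  finally show ?thesis .
qed

theorem corollary1:
  shows "\<exists>W0 W1 W2 W3 W4 W5 :: complex ^ four_idx ^ four_idx.
    cunitary W0 \<and> cunitary W1 \<and> cunitary W2 \<and> cunitary W3 \<and> cunitary W4 \<and> cunitary W5 \<and>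
    (\<forall>U \<in> SU2. \<forall>\<psi> :: complex ^ 2.
       (W5 ** anc_id_kron U ** W4 ** anc_id_kron U ** W3 ** anc_id_kron U ** W2 **
        anc_id_kron U ** W1 ** anc_id_kron U ** W0) *v vkron ket000 \<psi>
       = vkron ket000 (matrix_inv U *v \<psi>))"
proof -
  have "inversion_circuit U *v vkron ket000 \<psi> = vkron ket000 (matrix_inv U *v \<psi>)"
    if "U \<in> SU2" for U \<psi>
  proof -
    have "det U = 1"
      using that by (simp add: SU2_def)
    then show ?thesis
      by (simp add: inversion_circuit_apply matrix_inv_eq_adjugate2)
  qed
  then show ?thesis
    using cunitary_gates unfolding inversion_circuit_def by blast
qed

end
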